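(* Let $k\ge1$. For a coloring matrix $A$, let $\widehat{A}$ (the blowup of $A$) be the block matrix obtained by replacing every entry $1$ of $A$ by the $k\times k$ all-ones matrix and every entry $0$ by the $k\times k$ all-zeros matrix. If $A$ and $B$ are tree coloring equivalent, then so are $\widehat{A}$ and $\widehat{B}$; and if $A$ and $B$ are strictly tree coloring equivalent, then so are $\widehat{A}$ and $\widehat{B}$. Moreover, $t_{\widehat{A}}(n)=k^n t_A(n)$ for all $n\ge1$.
   Context: A plane tree is an unlabeled rooted tree in which the children of every vertex are linearly ordered. A coloring matrix is an $m\times m$ matrix $A=(a_{ij})$ with entries in $\{0,1\}$. An $A$-coloring of a plane tree assigns to each vertex a color in $\{1,\dots,m\}$ such that whenever a vertex of color $j$ is a child of a vertex of color $i$, $a_{ij}=1$. Let $t_A(n)$ be the number of pairs (plane tree with $n$ vertices, $A$-coloring of it) and $t_A^{(i)}(n)$ the number of those with root color $i$. Two coloring matrices $A,B$ of the same size are tree coloring equivalent if $t_A(n)=t_B(n)$ for all $n\ge1$, and strictly tree coloring equivalent if $t_A^{(i)}(n)=t_B^{(i)}(n)$ for all $n\ge1$ and all $i$. *)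

theory Defs
  imports Main
begin

(* Plane trees: unlabeled rooted trees, children linearly ordered (as a list). *)
datatype ptree = Node "ptree list"

(* Color-labelled plane trees; a coloring of a plane tree T is a labelled tree of shape T. *)
datatype ctree = CNode nat "ctree list"

fun nv :: "ptree \<Rightarrow> nat" where
  "nv (Node ts) = 1 + sum_list (map nv ts)"

fun shape :: "ctree \<Rightarrow> ptree" where
  "shape (CNode c ts) = Node (map shape ts)"

fun root_color :: "ctree \<Rightarrow> nat" where
  "root_color (CNode c ts) = c"

(* A coloring matrix of size m is A :: nat => nat => bool, A i j meaning a_ij = 1,
   colors are 0..m-1 (shifted from 1..m). *)
fun valid_col :: "nat \<Rightarrow> (nat \<Rightarrow> nat \<Rightarrow> bool) \<Rightarrow> ctree \<Rightarrow> bool" where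
  "valid_col m A (CNode c ts) =
     (c < m \<and> list_all (\<lambda>t. A c (root_color t) \<and> valid_col m A t) ts)"

definition tcount :: "nat \<Rightarrow> (nat \<Rightarrow> nat \<Rightarrow> bool) \<Rightarrow> nat \<Rightarrow> nat" where
  "tcount m A n = card {(T, C). nv T = n \<and> shape C = T \<and> valid_col m A C}"

definition tcount_root :: "nat \<Rightarrow> (nat \<Rightarrow> nat \<Rightarrow> bool) \<Rightarrow> nat \<Rightarrow> nat \<Rightarrow> nat" where
  "tcount_root m A i n =
     card {(T, C). nv T = n \<and> shape C = T \<and> valid_col m A C \<and> root_color C = i}"

definition tree_col_equiv :: "nat \<Rightarrow> (nat \<Rightarrow> nat \<Rightarrow> bool) \<Rightarrow> (nat \<Rightarrow> nat \<Rightarrow> bool) \<Rightarrow> bool" where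
  "tree_col_equiv m A B \<longleftrightarrow> (\<forall>n\<ge>1. tcount m A n = tcount m B n)"

definition strict_tree_col_equiv :: "nat \<Rightarrow> (nat \<Rightarrow> nat \<Rightarrow> bool) \<Rightarrow> (nat \<Rightarrow> nat \<Rightarrow> bool) \<Rightarrow> bool" where
  "strict_tree_col_equiv m A B \<longleftrightarrow>
     (\<forall>n\<ge>1. \<forall>i<m. tcount_root m A i n = tcount_root m B i n)"

(* blowup: index p of the (m*k)x(m*k) matrix lies in block p div k *)
definition blowup :: "nat \<Rightarrow> (nat \<Rightarrow> nat \<Rightarrow> bool) \<Rightarrow> (nat \<Rightarrow> nat \<Rightarrow> bool)" where
  "blowup k A = (\<lambda>p q. A (p div k) (q div k))"

end

theory Submission
  imports Defs
begin

text \<open>Collapsing every color \<open>c\<close> to its block \<open>c div k\<close> maps the colorings for the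
  blowup of \<open>A\<close> onto the \<open>A\<close>-colorings of the same tree. An \<open>A\<close>-coloring of a tree with
  \<open>n\<close> vertices has exactly \<open>k ^ n\<close> preimages, since every vertex independently picks one of
  the \<open>k\<close> colors of its block, and \<open>k ^ (n - 1)\<close> of them once the root color is prescribed
  within the root's block. So the blowup multiplies \<open>t(n)\<close> by \<open>k ^ n\<close>, and its count with
  root color \<open>i\<close> is \<open>k ^ (n - 1)\<close> times the count for \<open>A\<close> with root color \<open>i div k\<close>;
  both equivalences transfer at once.\<close>

lemma div_fibre_eq_atLeastLessThan:
  fixes k :: nat
  assumes "0 < k"
  shows "{i. i div k = c} = {c * k..<Suc c * k}"
proof (intro set_eqI iffI)
  fix i assume "i \<in> {i. i div k = c}"
  then show "i \<in> {c * k..<Suc c * k}"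
    using assms div_times_less_eq_dividend[of i k] dividend_less_div_times[of k i]
    by (auto simp: mult.commute)
qed (auto intro: div_nat_eqI simp: mult.commute)

lemma card_vimage_uniform_fibres:
  assumes fin: "\<And>y. y \<in> S \<Longrightarrow> finite (f -` {y} \<inter> X)"
    and card: "\<And>y. y \<in> S \<Longrightarrow> card (f -` {y} \<inter> X) = N"
    and "0 < N"
  shows "card (f -` S \<inter> X) = N * card S"
proof -
  have union: "f -` S \<inter> X = (\<Union>y\<in>S. f -` {y} \<inter> X)" by blast
  show ?thesis
  proof (cases "finite S")
    case True
    then show ?thesis
      unfolding union using fin card by (subst card_UN_disjoint) auto
  next
    case False
    have "S \<subseteq> f ` (f -` S \<inter> X)"
    proof
      fix y assume "y \<in> S"
      then have "f -` {y} \<inter> X \<noteq> {}" using card \<open>0 < N\<close> by fastforce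
      then show "y \<in> f ` (f -` S \<inter> X)" using \<open>y \<in> S\<close> by blast
    qed
    then have "infinite (f -` S \<inter> X)" using False finite_surj by blast
    then show ?thesis using False by simp
  qed
qed

lemma in_listset_iff: "xs \<in> listset As \<longleftrightarrow> list_all2 (\<in>) xs As"
  by (induction As arbitrary: xs) (auto simp: set_Cons_def list_all2_Cons2)

lemma set_Cons_eq_image: "set_Cons A Xs = (\<lambda>(x, xs). x # xs) ` (A \<times> Xs)"
  by (auto simp: set_Cons_def)

lemma card_listset:
  assumes "\<forall>A \<in> set As. finite A"
  shows "card (listset As) = prod_list (map card As)"
  using assms
proof (induction As)
  case (Cons A As)
  have "inj_on (\<lambda>(x, xs). x # xs) (A \<times> listset As)" by (auto simp: inj_on_def)
  then show ?case
    using Cons by (simp add: set_Cons_eq_image card_image card_cartesian_product)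
qed simp

lemma map_eq_iff_in_listset: "map f xs = ys \<longleftrightarrow> xs \<in> listset (map (\<lambda>y. f -` {y}) ys)"
  by (simp add: in_listset_iff list_all2_map2 list.rel_map(1)[symmetric] list.rel_eq)

lemma prod_list_power: "prod_list (map (\<lambda>t. (k::nat) ^ g t) ts) = k ^ sum_list (map g ts)"
  by (induction ts) (simp_all add: power_add)

fun recolor :: "(nat \<Rightarrow> nat) \<Rightarrow> ctree \<Rightarrow> ctree" where
  "recolor f (CNode c ts) = CNode (f c) (map (recolor f) ts)"

lemma shape_recolor [simp]: "shape (recolor f C) = shape C"
  by (induction C) (simp cong: map_cong)

lemma root_color_recolor [simp]: "root_color (recolor f C) = f (root_color C)"
  by (cases C) simp

abbreviation collapse :: "nat \<Rightarrow> ctree \<Rightarrow> ctree" where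
  "collapse k \<equiv> recolor (\<lambda>c. c div k)"

lemma valid_col_blowup_iff:
  assumes "0 < k"
  shows "valid_col (m * k) (blowup k A) C \<longleftrightarrow> valid_col m A (collapse k C)"
proof (induction C)
  case (CNode c ts)
  have "c < m * k \<longleftrightarrow> c div k < m"
    using assms by (simp add: div_less_iff_less_mult)
  with CNode show ?case by (auto simp: list_all_iff blowup_def)
qed

lemma collapse_vimage_CNode_root:
  assumes "i div k = c"
  shows "collapse k -` {CNode c ts} \<inter> {D. root_color D = i} =
           CNode i ` listset (map (\<lambda>t. collapse k -` {t}) ts)"
proof (intro set_eqI iffI)
  fix D assume "D \<in> collapse k -` {CNode c ts} \<inter> {D. root_color D = i}"
  then show "D \<in> CNode i ` listset (map (\<lambda>t. collapse k -` {t}) ts)"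
    by (cases D) (auto simp: map_eq_iff_in_listset)
qed (use assms in \<open>auto simp: map_eq_iff_in_listset[symmetric]\<close>)

lemma collapse_vimage_CNode:
  "collapse k -` {CNode c ts} =
     (\<lambda>(i, ts'). CNode i ts') ` ({i. i div k = c} \<times> listset (map (\<lambda>t. collapse k -` {t}) ts))"
    (is "_ = ?rhs")
proof (intro set_eqI iffI)
  fix D assume "D \<in> collapse k -` {CNode c ts}"
  then show "D \<in> ?rhs"
    by (cases D) (auto simp: map_eq_iff_in_listset)
qed (auto simp: map_eq_iff_in_listset[symmetric])

lemma card_collapse_fibre:
  assumes "0 < k"
  shows "card (collapse k -` {C}) = k ^ nv (shape C)"
proof (induction C)
  case (CNode c ts)
  let ?Ts = "listset (map (\<lambda>t. collapse k -` {t}) ts)"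
  have finite_fibres: "\<forall>t \<in> set ts. finite (collapse k -` {t})"
    using CNode assms by (auto intro: card_ge_0_finite)
  have "card ?Ts = prod_list (map (\<lambda>t. card (collapse k -` {t})) ts)"
    using finite_fibres by (simp add: card_listset comp_def)
  also have "\<dots> = prod_list (map (\<lambda>t. k ^ nv (shape t)) ts)"
    using CNode by (simp cong: map_cong)
  also have "\<dots> = k ^ sum_list (map (\<lambda>t. nv (shape t)) ts)"
    by (rule prod_list_power)
  finally have "card ?Ts = k ^ sum_list (map (\<lambda>t. nv (shape t)) ts)" .
  moreover have "inj_on (\<lambda>(i, ts'). CNode i ts') X" for X by (auto simp: inj_on_def)
  moreover have "card {i. i div k = c} = k" using div_fibre_eq_atLeastLessThan[OF assms] by simp
  ultimately show ?case
    by (simp add: collapse_vimage_CNode card_image card_cartesian_product comp_def)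
qed

lemma finite_collapse_fibre: "0 < k \<Longrightarrow> finite (collapse k -` {C})"
  by (simp add: card_collapse_fibre card_ge_0_finite)

lemma card_collapse_fibre_root:
  assumes "0 < k" and "i div k = root_color C"
  shows "card (collapse k -` {C} \<inter> {D. root_color D = i}) = k ^ (nv (shape C) - 1)"
proof (cases C)
  case (CNode c ts)
  let ?Ts = "listset (map (\<lambda>t. collapse k -` {t}) ts)"
  have "card ?Ts = prod_list (map (\<lambda>t. k ^ nv (shape t)) ts)"
    using assms(1) by (simp add: card_listset comp_def card_collapse_fibre finite_collapse_fibre)
  also have "\<dots> = k ^ sum_list (map (\<lambda>t. nv (shape t)) ts)"
    by (rule prod_list_power)
  finally have "card ?Ts = k ^ sum_list (map (\<lambda>t. nv (shape t)) ts)" .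
  moreover have "collapse k -` {C} \<inter> {D. root_color D = i} = CNode i ` ?Ts"
    using assms(2) CNode by (simp add: collapse_vimage_CNode_root)
  ultimately show ?thesis
    using CNode by (simp add: card_image inj_on_def comp_def)
qed

lemma tcount_eq_card_colorings:
  "tcount m A n = card {C. nv (shape C) = n \<and> valid_col m A C}"
proof -
  have "{(T, C). nv T = n \<and> shape C = T \<and> valid_col m A C} =
        (\<lambda>C. (shape C, C)) ` {C. nv (shape C) = n \<and> valid_col m A C}" by auto
  then show ?thesis unfolding tcount_def by (simp add: card_image inj_on_def)
qed

lemma tcount_root_eq_card_colorings:
  "tcount_root m A i n = card {C. nv (shape C) = n \<and> valid_col m A C \<and> root_color C = i}"
proof -
  have "{(T, C). nv T = n \<and> shape C = T \<and> valid_col m A C \<and> root_color C = i} =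
        (\<lambda>C. (shape C, C)) ` {C. nv (shape C) = n \<and> valid_col m A C \<and> root_color C = i}" by auto
  then show ?thesis unfolding tcount_root_def by (simp add: card_image inj_on_def)
qed

lemma tcount_blowup:
  assumes "0 < k"
  shows "tcount (m * k) (blowup k A) n = k ^ n * tcount m A n"
proof -
  let ?S = "{C. nv (shape C) = n \<and> valid_col m A C}"
  have "{D. nv (shape D) = n \<and> valid_col (m * k) (blowup k A) D} = collapse k -` ?S \<inter> UNIV"
    using valid_col_blowup_iff[OF assms] by auto
  moreover have "card (collapse k -` ?S \<inter> UNIV) = k ^ n * card ?S"
    using assms by (intro card_vimage_uniform_fibres)
      (simp_all add: card_collapse_fibre finite_collapse_fibre)
  ultimately show ?thesis by (simp add: tcount_eq_card_colorings)
qed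

lemma tcount_root_blowup:
  assumes "0 < k"
  shows "tcount_root (m * k) (blowup k A) i n = k ^ (n - 1) * tcount_root m A (i div k) n"
proof -
  let ?S = "{C. nv (shape C) = n \<and> valid_col m A C \<and> root_color C = i div k}"
  have "{D. nv (shape D) = n \<and> valid_col (m * k) (blowup k A) D \<and> root_color D = i} =
        collapse k -` ?S \<inter> {D. root_color D = i}"
    using valid_col_blowup_iff[OF assms] by auto
  moreover have "card (collapse k -` ?S \<inter> {D. root_color D = i}) = k ^ (n - 1) * card ?S"
    using assms by (intro card_vimage_uniform_fibres)
      (simp_all add: card_collapse_fibre_root finite_collapse_fibre)
  ultimately show ?thesis by (simp add: tcount_root_eq_card_colorings)
qed

theorem theorem22:
  fixes k m :: nat and A B :: "nat \<Rightarrow> nat \<Rightarrow> bool"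
  assumes "k \<ge> 1"
  shows "(tree_col_equiv m A B \<longrightarrow> tree_col_equiv (m * k) (blowup k A) (blowup k B))
       \<and> (strict_tree_col_equiv m A B \<longrightarrow>
            strict_tree_col_equiv (m * k) (blowup k A) (blowup k B))
       \<and> (\<forall>n\<ge>1. tcount (m * k) (blowup k A) n = k ^ n * tcount m A n)"
proof (intro conjI impI allI)
  have k: "0 < k" using assms by simp
  show "tcount (m * k) (blowup k A) n = k ^ n * tcount m A n" for n
    using tcount_blowup[OF k] .
  show "tree_col_equiv (m * k) (blowup k A) (blowup k B)" if "tree_col_equiv m A B"
    using that by (simp add: tree_col_equiv_def tcount_blowup[OF k])
  show "strict_tree_col_equiv (m * k) (blowup k A) (blowup k B)" if "strict_tree_col_equiv m A B"
    using that
    by (simp add: strict_tree_col_equiv_def tcount_root_blowup[OF k] less_mult_imp_div_less)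
qed

end
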